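(* Let $\mu$ be an integer with $h/2<\mu\le h$ and let $l$ be an integer with $2\le l\le n$. Then there exists $p\in\mathcal P$ such that $\Gamma_\mu(p)$ is $l$-cyclic if and only if $\mu\le \frac{l-1}{l}h$.
   Context: Let $n,h\ge2$, $N=\{1,\dots,n\}$, $H=\{1,\dots,h\}$, $\mathcal P$ the set of $h$-tuples of linear orders on $N$; $x>_{p_i}y$ means $x\neq y$ and $p_i$ ranks $x$ above $y$; $x>^p_\mu y$ means $|\{i: x>_{p_i}y\}|\ge\mu$. The $\mu$-majority graph is the directed graph $\Gamma_\mu(p)=(N,\{(x,y): x>^p_\mu y\})$. An $l$-cycle is a directed graph on $l$ distinct vertices $x_1,\dots,x_l$ with arc set exactly $\{(x_j,x_{j+1}):1\le j\le l\}$, $x_{l+1}=x_1$. A directed graph is $l$-cyclic if it has an $l$-cycle as a subgraph (vertex set and arc set contained in those of the graph). *)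

theory Defs
  imports Complex_Main
begin

text \<open>A preference profile with h voters on alternatives N = {1..n}:
  p i is a linear order on {1..n} for each voter i in {1..h};
  (x, y) \<in> p i means voter i ranks x weakly above y.\<close>

definition profiles :: "nat \<Rightarrow> nat \<Rightarrow> (nat \<Rightarrow> nat rel) set" where
  "profiles n h = {p. \<forall>i\<in>{1..h}. linear_order_on {1..n} (p i)}"

definition pref :: "nat rel \<Rightarrow> nat \<Rightarrow> nat \<Rightarrow> bool" where
  "pref r x y \<longleftrightarrow> x \<noteq> y \<and> (x, y) \<in> r"

definition maj :: "nat \<Rightarrow> nat \<Rightarrow> (nat \<Rightarrow> nat rel) \<Rightarrow> nat \<Rightarrow> nat \<Rightarrow> bool" where
  "maj h \<mu> p x y \<longleftrightarrow> card {i\<in>{1..h}. pref (p i) x y} \<ge> \<mu>"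

type_synonym digraph = "nat set \<times> (nat \<times> nat) set"

definition maj_graph :: "nat \<Rightarrow> nat \<Rightarrow> nat \<Rightarrow> (nat \<Rightarrow> nat rel) \<Rightarrow> digraph" where
  "maj_graph n h \<mu> p = ({1..n}, {(x, y). x \<in> {1..n} \<and> y \<in> {1..n} \<and> maj h \<mu> p x y})"

definition is_cycle :: "nat \<Rightarrow> digraph \<Rightarrow> bool" where
  "is_cycle l G \<longleftrightarrow> (\<exists>x :: nat \<Rightarrow> nat. inj_on x {1..l} \<and> fst G = x ` {1..l} \<and>
      snd G = {(x j, x (if j = l then 1 else j + 1)) | j. j \<in> {1..l}})"

definition subgraph :: "digraph \<Rightarrow> digraph \<Rightarrow> bool" where
  "subgraph C G \<longleftrightarrow> fst C \<subseteq> fst G \<and> snd C \<subseteq> snd G"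

definition l_cyclic :: "nat \<Rightarrow> digraph \<Rightarrow> bool" where
  "l_cyclic l G \<longleftrightarrow> (\<exists>C. is_cycle l C \<and> subgraph C G)"

end

(* Necessity is double counting: along an l-cycle each of the l arcs is supported by at least
   mu voters, while a voter's linear order cannot follow all l arcs of a cycle, so
   l * mu <= (l - 1) * h.  For sufficiency, split the voters into l consecutive blocks of at most
   m = h - mu voters; the voters of block k rank the cycle 1 -> 2 -> ... -> l -> 1 starting at k,
   so they reverse only the arc entering k.  Every arc then loses at most m voters and is
   supported by at least mu. *)

theory Submission
  imports Defs
begin

definition cycle_succ :: "nat \<Rightarrow> nat \<Rightarrow> nat" where
  "cycle_succ l j = (if j = l then 1 else j + 1)"

lemma is_cycle_cycle_succ:
  "is_cycle l G \<longleftrightarrow> (\<exists>x. inj_on x {1..l} \<and> fst G = x ` {1..l} \<and>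
      snd G = {(x j, x (cycle_succ l j)) | j. j \<in> {1..l}})"
  by (simp add: is_cycle_def cycle_succ_def)

lemma not_all_pref_cycle_arcs:
  assumes "trans r" "antisym r" "1 \<le> l"
  shows "\<not> (\<forall>j\<in>{1..l}. pref r (x j) (x (cycle_succ l j)))"
proof
  assume arcs: "\<forall>j\<in>{1..l}. pref r (x j) (x (cycle_succ l j))"
  have path: "(x 1, x j) \<in> r\<^sup>=" if "1 \<le> j" "j \<le> l" for j
    using that
  proof (induction j rule: nat_induct_at_least)
    case base
    show ?case by simp
  next
    case (Suc j)
    then have "(x j, x (Suc j)) \<in> r"
      using arcs[rule_format, of j] by (auto simp: pref_def cycle_succ_def)
    with Suc show ?case using \<open>trans r\<close> by (auto dest: transD)
  qed
  have closing_arc: "pref r (x l) (x 1)"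
    using arcs[rule_format, of l] \<open>1 \<le> l\<close> by (simp add: cycle_succ_def)
  then show False
    using path[of l] \<open>1 \<le> l\<close> \<open>antisym r\<close> by (auto simp: pref_def dest: antisymD)
qed

lemma card_pref_cycle_arcs_less:
  assumes "trans r" "antisym r" "1 \<le> l"
  shows "card {j\<in>{1..l}. pref r (x j) (x (cycle_succ l j))} < l"
proof -
  have "{j\<in>{1..l}. pref r (x j) (x (cycle_succ l j))} \<subset> {1..l}"
    using not_all_pref_cycle_arcs[OF assms] by blast
  then have "card {j\<in>{1..l}. pref r (x j) (x (cycle_succ l j))} < card {1..l}"
    by (rule psubset_card_mono[rotated]) simp
  then show ?thesis by simp
qed

lemma sum_card_Collect_swap:
  assumes "finite A" "finite B"
  shows "(\<Sum>j\<in>A. card {i\<in>B. P i j}) = (\<Sum>i\<in>B. card {j\<in>A. P i j})"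
proof -
  have "(\<Sum>j\<in>A. card {i\<in>B. P i j}) = (\<Sum>j\<in>A. \<Sum>i\<in>B. if P i j then 1 else 0)"
    using assms by (simp add: sum.If_cases Int_def)
  also have "\<dots> = (\<Sum>i\<in>B. \<Sum>j\<in>A. if P i j then 1 else 0)" by (rule sum.swap)
  also have "\<dots> = (\<Sum>i\<in>B. card {j\<in>A. P i j})"
    using assms by (simp add: sum.If_cases Int_def)
  finally show ?thesis .
qed

lemma l_cyclic_maj_graph_imp_bound:
  assumes p: "p \<in> profiles n h" and cyclic: "l_cyclic l (maj_graph n h \<mu> p)" and "1 \<le> l"
  shows "l * \<mu> \<le> (l - 1) * h"
proof -
  obtain C where "is_cycle l C" and sub: "subgraph C (maj_graph n h \<mu> p)"
    using cyclic unfolding l_cyclic_def by blast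
  then obtain x where arcs_C: "snd C = {(x j, x (cycle_succ l j)) | j. j \<in> {1..l}}"
    unfolding is_cycle_cycle_succ by blast
  have arc_maj: "maj h \<mu> p (x j) (x (cycle_succ l j))" if "j \<in> {1..l}" for j
  proof -
    have "(x j, x (cycle_succ l j)) \<in> snd C" using arcs_C that by blast
    then show ?thesis using sub unfolding subgraph_def maj_graph_def by auto
  qed
  have voter_bound: "card {j\<in>{1..l}. pref (p i) (x j) (x (cycle_succ l j))} \<le> l - 1"
    if "i \<in> {1..h}" for i
  proof -
    have "linear_order_on {1..n} (p i)"
      using p that unfolding profiles_def by blast
    then have "trans (p i)" "antisym (p i)"
      unfolding linear_order_on_def partial_order_on_def preorder_on_def by auto
    then have "card {j\<in>{1..l}. pref (p i) (x j) (x (cycle_succ l j))} < l"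
      using card_pref_cycle_arcs_less \<open>1 \<le> l\<close> by blast
    then show ?thesis by simp
  qed
  have "l * \<mu> = (\<Sum>j\<in>{1..l}. \<mu>)" by simp
  also have "\<dots> \<le> (\<Sum>j\<in>{1..l}. card {i\<in>{1..h}. pref (p i) (x j) (x (cycle_succ l j))})"
    using arc_maj by (intro sum_mono) (simp add: maj_def)
  also have "\<dots> = (\<Sum>i\<in>{1..h}. card {j\<in>{1..l}. pref (p i) (x j) (x (cycle_succ l j))})"
    by (rule sum_card_Collect_swap) auto
  also have "\<dots> \<le> (\<Sum>i\<in>{1..h}. l - 1)"
    using voter_bound by (intro sum_mono) auto
  also have "\<dots> = (l - 1) * h" by simp
  finally show ?thesis .
qed

definition rank_order :: "'a set \<Rightarrow> ('a \<Rightarrow> 'b::linorder) \<Rightarrow> 'a rel" where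
  "rank_order A g = {(x, y). x \<in> A \<and> y \<in> A \<and> g x \<le> g y}"

lemma linear_order_on_rank_order:
  assumes "inj_on g A"
  shows "linear_order_on A (rank_order A g)"
  using assms
  unfolding linear_order_on_def partial_order_on_def preorder_on_def rank_order_def
  by (auto simp: refl_on_def trans_def antisym_on_def total_on_def inj_on_def)

(* Ranks the alternatives as k, k + 1, ..., l, 1, ..., k - 1, l + 1, ..., n. *)
definition rotation_rank :: "nat \<Rightarrow> nat \<Rightarrow> nat \<Rightarrow> nat" where
  "rotation_rank l k y = (if y \<le> l then (if k \<le> y then y - k else y + l - k) else y)"

lemma inj_on_rotation_rank:
  assumes "k \<le> l"
  shows "inj_on (rotation_rank l k) {1..}"
  using assms unfolding inj_on_def rotation_rank_def by (auto split: if_splits)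

lemma rotation_rank_less_cycle_succ:
  assumes "1 \<le> k" "k \<le> l" "j \<in> {1..l}" "cycle_succ l j \<noteq> k"
  shows "rotation_rank l k j < rotation_rank l k (cycle_succ l j)"
  using assms unfolding rotation_rank_def cycle_succ_def by (auto split: if_splits)

definition rotation_profile :: "nat \<Rightarrow> nat \<Rightarrow> nat \<Rightarrow> nat \<Rightarrow> nat rel" where
  "rotation_profile n l m i = rank_order {1..n} (rotation_rank l ((i - 1) div m + 1))"

lemma pred_div_less_of_le_mult:
  fixes i :: nat
  assumes "1 \<le> i" "i \<le> l * m"
  shows "(i - 1) div m < l"
proof -
  have "0 < m" using assms by (cases m) auto
  moreover have "i - 1 < l * m" using assms by simp
  ultimately show ?thesis by (simp add: div_less_iff_less_mult mult.commute)
qed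

lemma rotation_profile_in_profiles:
  assumes "0 < m" "h \<le> l * m"
  shows "rotation_profile n l m \<in> profiles n h"
  unfolding profiles_def rotation_profile_def
proof (intro CollectI ballI linear_order_on_rank_order)
  fix i assume "i \<in> {1..h}"
  then have "(i - 1) div m < l"
    using \<open>h \<le> l * m\<close> by (intro pred_div_less_of_le_mult) auto
  then show "inj_on (rotation_rank l ((i - 1) div m + 1)) {1..n}"
    by (intro inj_on_subset[OF inj_on_rotation_rank]) auto
qed

lemma card_div_fibre_le:
  assumes "0 < m"
  shows "card {i\<in>{1..h}. (i - 1) div m = t} \<le> m"
proof -
  have "inj_on (\<lambda>i. (i - 1) mod m) {i\<in>{1..h}. (i - 1) div m = t}"
  proof (rule inj_onI)
    fix i j assume i: "i \<in> {i\<in>{1..h}. (i - 1) div m = t}" and j: "j \<in> {i\<in>{1..h}. (i - 1) div m = t}"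
      and "(i - 1) mod m = (j - 1) mod m"
    then have "i - 1 = j - 1" by (metis (mono_tags, lifting) div_mult_mod_eq mem_Collect_eq)
    then show "i = j" using i j by simp linarith
  qed
  then have "card {i\<in>{1..h}. (i - 1) div m = t} \<le> card {..<m}"
    by (rule card_inj_on_le) (auto simp: assms)
  then show ?thesis by simp
qed

lemma maj_rotation_profile_cycle_arc:
  assumes "0 < m" "h \<le> l * m" "\<mu> + m \<le> h" "l \<le> n" "j \<in> {1..l}"
  shows "maj h \<mu> (rotation_profile n l m) j (cycle_succ l j)"
proof -
  let ?against = "{i\<in>{1..h}. (i - 1) div m = cycle_succ l j - 1}"
  let ?support = "{i\<in>{1..h}. pref (rotation_profile n l m i) j (cycle_succ l j)}"
  have "{1..h} - ?against \<subseteq> ?support"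
  proof
    fix i assume i: "i \<in> {1..h} - ?against"
    then have "(i - 1) div m < l"
      using \<open>h \<le> l * m\<close> by (intro pred_div_less_of_le_mult) auto
    moreover have "cycle_succ l j \<noteq> (i - 1) div m + 1"
      using i by (auto simp: cycle_succ_def)
    ultimately have "rotation_rank l ((i - 1) div m + 1) j
        < rotation_rank l ((i - 1) div m + 1) (cycle_succ l j)"
      using assms(5) by (intro rotation_rank_less_cycle_succ) auto
    moreover have "cycle_succ l j \<in> {1..n}" using assms(4,5) by (auto simp: cycle_succ_def)
    ultimately show "i \<in> ?support"
      using i assms(4,5) by (auto simp: pref_def rotation_profile_def rank_order_def)
  qed
  then have "card ({1..h} - ?against) \<le> card ?support"
    by (intro card_mono) auto
  moreover have "card {1..h} - card ?against \<le> card ({1..h} - ?against)"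
    by (rule diff_card_le_card_Diff) auto
  moreover have "card ?against \<le> m"
    using card_div_fibre_le[OF \<open>0 < m\<close>] .
  ultimately show ?thesis
    using \<open>\<mu> + m \<le> h\<close> unfolding maj_def by simp
qed

lemma l_cyclic_maj_graph_rotation_profile:
  assumes "0 < m" "h \<le> l * m" "\<mu> + m \<le> h" "l \<le> n"
  shows "l_cyclic l (maj_graph n h \<mu> (rotation_profile n l m))"
proof -
  let ?C = "({1..l}, {(j, cycle_succ l j) | j. j \<in> {1..l}})"
  have "is_cycle l ?C"
    unfolding is_cycle_cycle_succ by (rule exI[of _ id]) simp
  moreover have "cycle_succ l j \<in> {1..n}" if "j \<in> {1..l}" for j
    using that \<open>l \<le> n\<close> by (auto simp: cycle_succ_def)
  then have "subgraph ?C (maj_graph n h \<mu> (rotation_profile n l m))"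
    using \<open>l \<le> n\<close> maj_rotation_profile_cycle_arc[OF assms(1-4)]
    by (auto simp: subgraph_def maj_graph_def)
  ultimately show ?thesis unfolding l_cyclic_def by blast
qed

theorem proposition7:
  fixes n h \<mu> l :: nat
  assumes "n \<ge> 2" and "h \<ge> 2"
    and "real h / 2 < real \<mu>" and "\<mu> \<le> h"
    and "2 \<le> l" and "l \<le> n"
  shows "(\<exists>p\<in>profiles n h. l_cyclic l (maj_graph n h \<mu> p))
           \<longleftrightarrow> real \<mu> \<le> (real l - 1) / real l * real h"
proof -
  have "real \<mu> \<le> (real l - 1) / real l * real h \<longleftrightarrow> real (l * \<mu>) \<le> real ((l - 1) * h)"
    using \<open>2 \<le> l\<close> by (simp add: field_simps of_nat_diff)
  then have bound_iff: "real \<mu> \<le> (real l - 1) / real l * real h \<longleftrightarrow> l * \<mu> \<le> (l - 1) * h"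
    by (simp only: of_nat_le_iff)
  show ?thesis
    unfolding bound_iff
  proof
    assume "\<exists>p\<in>profiles n h. l_cyclic l (maj_graph n h \<mu> p)"
    then show "l * \<mu> \<le> (l - 1) * h"
      using l_cyclic_maj_graph_imp_bound \<open>2 \<le> l\<close> by fastforce
  next
    assume "l * \<mu> \<le> (l - 1) * h"
    moreover have "(l - 1) * h + h = l * h" using \<open>2 \<le> l\<close> by (cases l) auto
    ultimately have "h \<le> l * (h - \<mu>)" by (simp add: diff_mult_distrib2)
    moreover from this have "0 < h - \<mu>" using \<open>h \<ge> 2\<close> by (cases "h - \<mu>") auto
    moreover have "\<mu> + (h - \<mu>) \<le> h" using \<open>\<mu> \<le> h\<close> by simp
    ultimately show "\<exists>p\<in>profiles n h. l_cyclic l (maj_graph n h \<mu> p)"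
      using rotation_profile_in_profiles l_cyclic_maj_graph_rotation_profile \<open>l \<le> n\<close> by blast
  qed
qed

end
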